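(* Suppose there exist a graph $H$ and a positive-valued function $h:V(H)\to\mathbb N$ such that $(H,h)$ is strict type 3 degenerate but not removable. Then there exist a graph $G$ and an integer $k$ such that, for the constant function $g:V(G)\to\{k\}$, the pair $(G,g)$ is strict type 3 degenerate but not removable.
   Context: All graphs are finite and simple. Strict type 3 degeneracy: for a graph $G$ and positive-valued $f:V(G)\to\mathbb N$, $\mathsf{ReduceValue}_v(G,f)$ returns $(G,f')$ with $f'(v)=f(v)-1$ and $f'=f$ elsewhere; for an edge $vw$, $\mathsf{EdgeDelete}_{vw}(G,f)$ returns $(G-vw,f')$ with $f'(v)=f(v)-f(w)$ and $f'=f$ elsewhere. $(G,f)$ is strict type 3 degenerate if repeated application of these operations reduces it to an edgeless graph together with a positive-valued function. Removability: for $u\in V(G)$ and $W\subseteq N(u)$, $\mathsf{DelSave}(G,f,u,W)$ outputs $G'=G-u$ and $f'$ with $f'(x)=f(x)-1$ for $x\in N(u)\setminus W$ and $f'(x)=f(x)$ otherwise; it is legal if $f(u)>\sum_{w\in W}f(w)$ and $f'(x)\ge1$ for all $x\in V(G')$. $(G,f)$ is removable if all vertices of $G$ can be deleted by successive legal $\mathsf{DelSave}$ applications, each time replacing $(G,f)$ by the output. *)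

theory Defs
  imports Main
begin

text \<open>A finite simple graph: a finite vertex set V and a set E of 2-element subsets of V.
  Vertex weights are integer-valued functions; only their values on V matter.\<close>

definition simple_graph :: "'a set \<Rightarrow> 'a set set \<Rightarrow> bool" where
  "simple_graph V E \<longleftrightarrow> finite V \<and>
     (\<forall>e\<in>E. \<exists>u v. u \<noteq> v \<and> u \<in> V \<and> v \<in> V \<and> e = {u, v})"

definition nbhd :: "'a set set \<Rightarrow> 'a \<Rightarrow> 'a set" where
  "nbhd E u = {x. {u, x} \<in> E}"

inductive strict_t3_degenerate :: "'a set \<Rightarrow> 'a set set \<Rightarrow> ('a \<Rightarrow> int) \<Rightarrow> bool" where
  finish: "E = {} \<Longrightarrow> (\<forall>v\<in>V. f v > 0) \<Longrightarrow> strict_t3_degenerate V E f"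
| reduce_value: "v \<in> V \<Longrightarrow> strict_t3_degenerate V E (f(v := f v - 1))
     \<Longrightarrow> strict_t3_degenerate V E f"
| edge_delete: "{v, w} \<in> E \<Longrightarrow> v \<noteq> w \<Longrightarrow>
     strict_t3_degenerate V (E - {{v, w}}) (f(v := f v - f w))
     \<Longrightarrow> strict_t3_degenerate V E f"

definition delsave_fun :: "'a set set \<Rightarrow> ('a \<Rightarrow> int) \<Rightarrow> 'a \<Rightarrow> 'a set \<Rightarrow> 'a \<Rightarrow> int" where
  "delsave_fun E f u W = (\<lambda>x. if x \<in> nbhd E u - W then f x - 1 else f x)"

inductive removable :: "'a set \<Rightarrow> 'a set set \<Rightarrow> ('a \<Rightarrow> int) \<Rightarrow> bool" where
  empty: "V = {} \<Longrightarrow> removable V E f"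
| delsave: "u \<in> V \<Longrightarrow> W \<subseteq> nbhd E u \<Longrightarrow> f u > (\<Sum>w\<in>W. f w) \<Longrightarrow>
     (\<forall>x\<in>V - {u}. delsave_fun E f u W x \<ge> 1) \<Longrightarrow>
     removable (V - {u}) {e\<in>E. u \<notin> e} (delsave_fun E f u W)
     \<Longrightarrow> removable V E f"

end

theory Submission
  imports Defs
begin

text \<open>Let \<open>k\<close> be the maximum of \<open>h\<close> and \<open>X\<close> the set of vertices of weight below \<open>k\<close>.
  The blow-up of \<open>(H, h)\<close> has one copy of \<open>H\<close> for every repetition-free word \<open>\<sigma>\<close> over
  \<open>X\<close>; vertex \<open>x\<close> of copy \<open>\<rho>\<close> is joined to vertex \<open>x\<close> of every copy \<open>\<rho> x \<tau>\<close>,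
  and the vertices of \<open>X\<close> get weight \<open>h + 1\<close> in every copy.

  The blow-up is strict type 3 degenerate: treat the copies by increasing word length.
  When copy \<open>\<sigma>\<close> is treated, the copies \<open>\<rho>\<close> with \<open>\<rho> x\<close> a prefix of \<open>\<sigma>\<close> already have
  weight 1, so deleting the link edges at \<open>(\<sigma>, x)\<close> takes away exactly the extra unit;
  then the degeneracy sequence of \<open>H\<close> runs inside copy \<open>\<sigma>\<close>, after which the copy is
  lowered to weight 1.

  The blow-up is not removable: along a removal sequence, mark a vertex as spent when
  a neighbour in another copy is deleted without saving it, or when the vertex saves
  such a neighbour itself. Every link edge ends up with a spent end, and every copy
  all of whose \<open>X\<close>-vertices are spent inherits a removal sequence of \<open>(H, h)\<close>.
  Walking down the tree of words along unspent vertices yields such a copy.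

  Each blow-up raises every weight below \<open>k\<close> by one, so \<open>k - 1\<close> rounds give
  the constant weight \<open>k\<close>.\<close>

definition induced :: "'a set set \<Rightarrow> 'a set \<Rightarrow> 'a set set" where
  "induced E S = {e \<in> E. e \<subseteq> S}"

definition degenerate_nonremovable :: "'a set \<Rightarrow> 'a set set \<Rightarrow> ('a \<Rightarrow> int) \<Rightarrow> bool" where
  "degenerate_nonremovable V E f \<longleftrightarrow>
     simple_graph V E \<and> strict_t3_degenerate V E f \<and> \<not> removable V E f"

lemma simple_graph_edgeD:
  assumes "simple_graph V E" "{u, w} \<in> E"
  shows "u \<noteq> w" "u \<in> V" "w \<in> V"
  using assms unfolding simple_graph_def by (auto simp: doubleton_eq_iff)

lemma simple_graph_edgeE:
  assumes "simple_graph V E" "e \<in> E"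
  obtains u v where "u \<noteq> v" "u \<in> V" "v \<in> V" "e = {u, v}"
  using assms unfolding simple_graph_def by blast

lemma simple_graph_edge_subset: "simple_graph V E \<Longrightarrow> e \<in> E \<Longrightarrow> e \<subseteq> V"
  unfolding simple_graph_def by auto

lemma simple_graph_induced:
  assumes "simple_graph V E" "S \<subseteq> V"
  shows "simple_graph S (induced E S)"
proof -
  have "finite S"
    using assms(1) finite_subset[OF assms(2)] unfolding simple_graph_def by simp
  moreover have "\<forall>e\<in>induced E S. \<exists>u v. u \<noteq> v \<and> u \<in> S \<and> v \<in> S \<and> e = {u, v}"
    using assms(1) unfolding simple_graph_def induced_def by fastforce
  ultimately show ?thesis
    unfolding simple_graph_def by simp
qed

lemma induced_self: "simple_graph V E \<Longrightarrow> induced E V = E"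
  unfolding induced_def by (auto dest: simple_graph_edge_subset)

lemma induced_remove: "{e \<in> induced E S. u \<notin> e} = induced E (S - {u})"
  unfolding induced_def by blast

lemma simple_graph_remove:
  assumes "simple_graph V E"
  shows "simple_graph (V - {u}) {e \<in> E. u \<notin> e}"
proof -
  have "{e \<in> E. u \<notin> e} = induced E (V - {u})"
    using simple_graph_edge_subset[OF assms] unfolding induced_def by blast
  then show ?thesis
    using simple_graph_induced[OF assms, of "V - {u}"] by simp
qed

lemma simple_graph_image:
  assumes "simple_graph V E" "inj_on \<phi> V"
  shows "simple_graph (\<phi> ` V) ((`) \<phi> ` E)"
  unfolding simple_graph_def
proof (intro conjI ballI)
  show "finite (\<phi> ` V)" using assms(1) unfolding simple_graph_def by blast
  fix e' assume "e' \<in> (`) \<phi> ` E"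
  then obtain e where "e \<in> E" "e' = \<phi> ` e" by blast
  moreover obtain u v where "u \<noteq> v" "u \<in> V" "v \<in> V" "e = {u, v}"
    using assms(1) \<open>e \<in> E\<close> unfolding simple_graph_def by blast
  moreover have "\<phi> u \<noteq> \<phi> v"
    using inj_on_contraD[OF assms(2)] \<open>u \<noteq> v\<close> \<open>u \<in> V\<close> \<open>v \<in> V\<close> .
  ultimately show "\<exists>u v. u \<noteq> v \<and> u \<in> \<phi> ` V \<and> v \<in> \<phi> ` V \<and> e' = {u, v}"
    by (intro exI[of _ "\<phi> u"] exI[of _ "\<phi> v"]) simp
qed

lemma removable_weight_ge_1:
  assumes "removable V E f" "simple_graph V E" "x \<in> V"
  shows "1 \<le> f x"
  using assms(1)
proof cases
  case (delsave u W)
  have rest: "1 \<le> f y" if "y \<in> V - {u}" for y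
  proof -
    have "1 \<le> delsave_fun E f u W y" using delsave(4) that by blast
    then show ?thesis by (auto simp: delsave_fun_def split: if_splits)
  qed
  have "W \<subseteq> V - {u}"
    using delsave(2) simple_graph_edgeD[OF assms(2)] unfolding nbhd_def by blast
  then have "0 \<le> sum f W"
    using rest by (intro sum_nonneg) force
  then show ?thesis
    using rest[of x] delsave(3) assms(3) by (cases "x = u") auto
qed (use assms in simp)

lemma image_edge_iff:
  assumes "simple_graph V E" "inj_on \<phi> V" "u \<in> V" "x \<in> V"
  shows "{\<phi> u, \<phi> x} \<in> (`) \<phi> ` E \<longleftrightarrow> {u, x} \<in> E"
proof
  assume "{\<phi> u, \<phi> x} \<in> (`) \<phi> ` E"
  then obtain e where "e \<in> E" "\<phi> ` {u, x} = \<phi> ` e" by auto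
  moreover have "e \<subseteq> V" using simple_graph_edge_subset[OF assms(1) \<open>e \<in> E\<close>] .
  ultimately have "{u, x} = e"
    using inj_on_image_eq_iff[OF assms(2), of "{u, x}" e] assms(3,4) by simp
  with \<open>e \<in> E\<close> show "{u, x} \<in> E" by simp
next
  assume "{u, x} \<in> E"
  then have "\<phi> ` {u, x} \<in> (`) \<phi> ` E" by (rule imageI)
  then show "{\<phi> u, \<phi> x} \<in> (`) \<phi> ` E" by simp
qed

lemma image_edges_avoiding:
  assumes "simple_graph V E" "inj_on \<phi> V" "u \<in> V"
  shows "{e \<in> (`) \<phi> ` E. \<phi> u \<notin> e} = (`) \<phi> ` {e \<in> E. u \<notin> e}"
proof -
  have "\<phi> u \<in> \<phi> ` e \<longleftrightarrow> u \<in> e" if "e \<in> E" for e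
    using inj_on_image_mem_iff[OF assms(2,3) simple_graph_edge_subset[OF assms(1) that]] .
  then show ?thesis by auto
qed

lemma removable_image:
  assumes "removable V E f" "simple_graph V E" "inj_on \<phi> V" "\<forall>x\<in>V. g (\<phi> x) = f x"
  shows "removable (\<phi> ` V) ((`) \<phi> ` E) g"
  using assms
proof (induction arbitrary: g rule: removable.induct)
  case (empty V E f)
  then show ?case by (simp add: removable.empty)
next
  case (delsave u V W E f)
  let ?E = "(`) \<phi> ` E" and ?W = "\<phi> ` W"
  note edge = image_edge_iff[OF delsave.prems(1,2) delsave.hyps(1)]
  have WV: "W \<subseteq> V"
    using delsave.hyps(2) simple_graph_edgeD(3)[OF delsave.prems(1)] unfolding nbhd_def by blast
  have fun_eq: "delsave_fun ?E g (\<phi> u) ?W (\<phi> x) = delsave_fun E f u W x" if "x \<in> V" for x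
    using that edge[OF that] delsave.prems(3) inj_on_image_mem_iff[OF delsave.prems(2) that WV]
    by (simp add: delsave_fun_def nbhd_def)
  have image_remove: "\<phi> ` V - {\<phi> u} = \<phi> ` (V - {u})"
    using delsave.prems(2) delsave.hyps(1) by (auto simp: inj_on_def)
  have sum_eq: "sum g ?W = sum f W"
  proof -
    have "sum g ?W = (\<Sum>x\<in>W. g (\<phi> x))"
      using sum.reindex[OF inj_on_subset[OF delsave.prems(2) WV]] by simp
    also have "\<dots> = sum f W"
      using delsave.prems(3) WV by (intro sum.cong) auto
    finally show ?thesis .
  qed
  show ?case
  proof (rule removable.delsave)
    show "\<phi> u \<in> \<phi> ` V"
      using delsave.hyps(1) by simp
    show "?W \<subseteq> nbhd ?E (\<phi> u)"
      using delsave.hyps(2) WV edge unfolding nbhd_def by auto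
    show "sum g ?W < g (\<phi> u)"
      using delsave.hyps(1,3) delsave.prems(3) sum_eq by simp
    show "\<forall>y\<in>\<phi> ` V - {\<phi> u}. 1 \<le> delsave_fun ?E g (\<phi> u) ?W y"
      unfolding image_remove using delsave.hyps(4) fun_eq by simp
    show "removable (\<phi> ` V - {\<phi> u}) {e \<in> ?E. \<phi> u \<notin> e} (delsave_fun ?E g (\<phi> u) ?W)"
      unfolding image_remove image_edges_avoiding[OF delsave.prems(1,2) delsave.hyps(1)]
      by (rule delsave.IH[OF simple_graph_remove[OF delsave.prems(1)]
            inj_on_subset[OF delsave.prems(2)]]) (use fun_eq in auto)
  qed
qed

section \<open>Reduction sequences\<close>

inductive t3_reduces :: "'a set \<Rightarrow> 'a set set \<Rightarrow> ('a \<Rightarrow> int) \<Rightarrow> 'a set set \<Rightarrow> ('a \<Rightarrow> int) \<Rightarrow> bool"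
  for V :: "'a set" where
  refl: "t3_reduces V E f E f"
| reduce_value: "v \<in> V \<Longrightarrow> t3_reduces V E (f(v := f v - 1)) E' f' \<Longrightarrow> t3_reduces V E f E' f'"
| edge_delete: "{v, w} \<in> E \<Longrightarrow> v \<noteq> w \<Longrightarrow>
    t3_reduces V (E - {{v, w}}) (f(v := f v - f w)) E' f' \<Longrightarrow> t3_reduces V E f E' f'"

lemma t3_reduces_trans:
  "t3_reduces V E1 f1 E2 f2 \<Longrightarrow> t3_reduces V E2 f2 E3 f3 \<Longrightarrow> t3_reduces V E1 f1 E3 f3"
  by (induction rule: t3_reduces.induct) (auto intro: t3_reduces.intros)

lemma strict_t3_degenerate_if_reduces:
  "t3_reduces V E f E' f' \<Longrightarrow> strict_t3_degenerate V E' f' \<Longrightarrow> strict_t3_degenerate V E f"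
  by (induction rule: t3_reduces.induct) (auto intro: strict_t3_degenerate.intros)

lemma strict_t3_degenerate_iff_reduces:
  "strict_t3_degenerate V E f \<longleftrightarrow> (\<exists>f'. t3_reduces V E f {} f' \<and> (\<forall>v\<in>V. 0 < f' v))"
proof
  show "strict_t3_degenerate V E f \<Longrightarrow> \<exists>f'. t3_reduces V E f {} f' \<and> (\<forall>v\<in>V. 0 < f' v)"
  proof (induction rule: strict_t3_degenerate.induct)
    case (finish E V f)
    then show ?case by (auto intro: t3_reduces.refl)
  next
    case (reduce_value v V E f)
    then obtain f' where "t3_reduces V E (f(v := f v - 1)) {} f'" "\<forall>v\<in>V. 0 < f' v"
      by blast
    then show ?case using reduce_value.hyps(1) by (blast intro: t3_reduces.reduce_value)
  next
    case (edge_delete v w E V f)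
    then obtain f' where "t3_reduces V (E - {{v, w}}) (f(v := f v - f w)) {} f'" "\<forall>v\<in>V. 0 < f' v"
      by blast
    then show ?case using edge_delete.hyps(1,2) by (blast intro: t3_reduces.edge_delete)
  qed
qed (auto intro: strict_t3_degenerate_if_reduces strict_t3_degenerate.finish)

lemma t3_reduces_reduce_value_iter:
  "v \<in> V \<Longrightarrow> t3_reduces V E f E (f(v := f v - int n))"
proof (induction n arbitrary: f)
  case 0
  then show ?case by (simp add: t3_reduces.refl)
next
  case (Suc n)
  have "(f(v := f v - 1))(v := (f(v := f v - 1)) v - int n) = f(v := f v - int (Suc n))"
    by (simp add: algebra_simps)
  then show ?case
    using t3_reduces.reduce_value[OF Suc.prems Suc.IH[OF Suc.prems, of "f(v := f v - 1)"]]
    by metis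
qed

lemma t3_reduces_lower:
  assumes "finite S" "S \<subseteq> V" "\<forall>x\<in>S. g x \<le> f x" "\<forall>x. x \<notin> S \<longrightarrow> g x = f x"
  shows "t3_reduces V E f E g"
  using assms
proof (induction S arbitrary: f rule: finite_induct)
  case empty
  then have "g = f" by auto
  then show ?case by (simp add: t3_reduces.refl)
next
  case (insert y S)
  have "f(y := f y - int (nat (f y - g y))) = f(y := g y)"
    using insert.prems(2) by simp
  then have "t3_reduces V E f E (f(y := g y))"
    using t3_reduces_reduce_value_iter[of y V E f "nat (f y - g y)"] insert.prems(1) by simp
  moreover have "t3_reduces V E (f(y := g y)) E g"
    using insert.prems insert.hyps(2) by (intro insert.IH) auto
  ultimately show ?case by (rule t3_reduces_trans)
qed

lemma override_on_comp_update:
  assumes "\<forall>x\<in>V. \<psi> (\<phi> x) = x" "v \<in> V"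
  shows "override_on F (f(v := a) \<circ> \<psi>) (\<phi> ` V) = (override_on F (f \<circ> \<psi>) (\<phi> ` V))(\<phi> v := a)"
proof
  fix y
  show "override_on F (f(v := a) \<circ> \<psi>) (\<phi> ` V) y = ((override_on F (f \<circ> \<psi>) (\<phi> ` V))(\<phi> v := a)) y"
  proof (cases "y \<in> \<phi> ` V")
    case True
    then obtain x where x: "x \<in> V" "y = \<phi> x" by blast
    then have "\<phi> x = \<phi> v \<longleftrightarrow> x = v" using assms by metis
    then show ?thesis using assms x by (auto simp: override_on_def)
  next
    case False
    then show ?thesis using assms(2) by (auto simp: override_on_def)
  qed
qed

lemma image_edges_remove:
  assumes "inj_on \<phi> V" "\<forall>e\<in>E. e \<subseteq> V" "{v, w} \<subseteq> V" "\<phi> ` {v, w} \<notin> R"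
  shows "(R \<union> (`) \<phi> ` E) - {{\<phi> v, \<phi> w}} = R \<union> (`) \<phi> ` (E - {{v, w}})"
proof -
  have "(`) \<phi> ` (E - {{v, w}}) = (`) \<phi> ` E - {\<phi> ` {v, w}}"
    using inj_on_image_set_diff[OF inj_on_image_Pow[OF assms(1)], of E "{{v, w}}"] assms(2,3) by auto
  then show ?thesis
    using assms(4) by auto
qed

lemma t3_reduces_embed:
  assumes "t3_reduces V E f E' f'" "\<forall>e\<in>E. e \<subseteq> V" "\<forall>x\<in>V. \<psi> (\<phi> x) = x"
    "\<phi> ` V \<subseteq> V'" "\<forall>e\<in>E. \<phi> ` e \<notin> R"
  shows "t3_reduces V' (R \<union> (`) \<phi> ` E) (override_on F (f \<circ> \<psi>) (\<phi> ` V))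
           (R \<union> (`) \<phi> ` E') (override_on F (f' \<circ> \<psi>) (\<phi> ` V))"
  using assms
proof (induction rule: t3_reduces.induct)
  case (refl E f)
  show ?case by (rule t3_reduces.refl)
next
  case (reduce_value v E f E' f')
  let ?F = "override_on F (f \<circ> \<psi>) (\<phi> ` V)"
  have upd: "override_on F (f(v := f v - 1) \<circ> \<psi>) (\<phi> ` V) = ?F(\<phi> v := ?F (\<phi> v) - 1)"
    using override_on_comp_update[of V \<psi> \<phi> v F f "f v - 1"] reduce_value.prems(2)
      reduce_value.hyps(1) by simp
  show ?case
  proof (rule t3_reduces.reduce_value)
    show "\<phi> v \<in> V'"
      using reduce_value.prems(3) reduce_value.hyps(1) by blast
    show "t3_reduces V' (R \<union> (`) \<phi> ` E) (?F(\<phi> v := ?F (\<phi> v) - 1))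
        (R \<union> (`) \<phi> ` E') (override_on F (f' \<circ> \<psi>) (\<phi> ` V))"
      unfolding upd[symmetric] by (rule reduce_value.IH[OF reduce_value.prems])
  qed
next
  case (edge_delete v w E f E' f')
  let ?F = "override_on F (f \<circ> \<psi>) (\<phi> ` V)"
  have vw_sub: "{v, w} \<subseteq> V"
    using edge_delete.prems(1) edge_delete.hyps(1) by (rule bspec)
  then have vw: "v \<in> V" "w \<in> V"
    by simp_all
  have inj: "inj_on \<phi> V"
    by (rule inj_on_inverseI[of V \<psi>]) (use edge_delete.prems(2) in simp)
  have "\<phi> ` {v, w} \<notin> R"
    using edge_delete.prems(4) edge_delete.hyps(1) by blast
  then have edges: "(R \<union> (`) \<phi> ` E) - {{\<phi> v, \<phi> w}} = R \<union> (`) \<phi> ` (E - {{v, w}})"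
    by (rule image_edges_remove[OF inj edge_delete.prems(1) vw_sub])
  have "?F (\<phi> v) = f v" "?F (\<phi> w) = f w"
    using edge_delete.prems(2) vw by simp_all
  then have upd: "override_on F (f(v := f v - f w) \<circ> \<psi>) (\<phi> ` V) = ?F(\<phi> v := ?F (\<phi> v) - ?F (\<phi> w))"
    using override_on_comp_update[of V \<psi> \<phi> v F f "f v - f w"] edge_delete.prems(2) vw(1)
    by simp
  have "{\<phi> v, \<phi> w} \<in> R \<union> (`) \<phi> ` E"
    using imageI[OF edge_delete.hyps(1), of "(`) \<phi>"] by simp
  moreover have "\<phi> v \<noteq> \<phi> w"
    using inj_on_contraD[OF inj edge_delete.hyps(2) vw] .
  moreover have "t3_reduces V' ((R \<union> (`) \<phi> ` E) - {{\<phi> v, \<phi> w}}) (?F(\<phi> v := ?F (\<phi> v) - ?F (\<phi> w)))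
      (R \<union> (`) \<phi> ` E') (override_on F (f' \<circ> \<psi>) (\<phi> ` V))"
    unfolding edges upd[symmetric]
    by (rule edge_delete.IH) (use edge_delete.prems in blast)+
  ultimately show ?case
    by (rule t3_reduces.edge_delete)
qed

lemma strict_t3_degenerate_image:
  assumes "strict_t3_degenerate V E f" "simple_graph V E" "inj_on \<phi> V" "\<forall>x\<in>V. g (\<phi> x) = f x"
  shows "strict_t3_degenerate (\<phi> ` V) ((`) \<phi> ` E) g"
proof -
  let ?\<psi> = "inv_into V \<phi>"
  obtain f' where f': "t3_reduces V E f {} f'" "\<forall>v\<in>V. 0 < f' v"
    using assms(1)[unfolded strict_t3_degenerate_iff_reduces] by blast
  have "\<forall>x\<in>V. ?\<psi> (\<phi> x) = x"
    using assms(3) by simp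
  then have "t3_reduces (\<phi> ` V) ({} \<union> (`) \<phi> ` E) (override_on g (f \<circ> ?\<psi>) (\<phi> ` V))
          ({} \<union> (`) \<phi> ` {}) (override_on g (f' \<circ> ?\<psi>) (\<phi> ` V))"
    using simple_graph_edge_subset[OF assms(2)]
    by (intro t3_reduces_embed[OF f'(1)]) auto
  moreover have "override_on g (f \<circ> ?\<psi>) (\<phi> ` V) = g"
  proof
    fix y
    show "override_on g (f \<circ> ?\<psi>) (\<phi> ` V) y = g y"
      using assms(3,4) by (cases "y \<in> \<phi> ` V") auto
  qed
  ultimately have "t3_reduces (\<phi> ` V) ((`) \<phi> ` E) g {} (override_on g (f' \<circ> ?\<psi>) (\<phi> ` V))"
    by simp
  moreover have "\<forall>y\<in>\<phi> ` V. 0 < override_on g (f' \<circ> ?\<psi>) (\<phi> ` V) y"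
    using f'(2) assms(3) by simp
  ultimately show ?thesis
    using strict_t3_degenerate_iff_reduces by blast
qed

lemma t3_reduces_delete_matching:
  assumes "finite S" "inj_on b S" "\<forall>x\<in>S. a x \<notin> b ` S" "\<forall>x\<in>S. f (a x) = 1"
    "\<forall>x\<in>S. {a x, b x} \<notin> Q"
  shows "t3_reduces V (Q \<union> (\<lambda>x. {a x, b x}) ` S) f Q (\<lambda>y. if y \<in> b ` S then f y - 1 else f y)"
  using assms
proof (induction S arbitrary: f rule: finite_induct)
  case empty
  show ?case by (simp add: t3_reduces.refl)
next
  case (insert x S)
  let ?f = "f(b x := f (b x) - f (a x))"
  have bx: "b x \<notin> b ` S"
    using insert.prems(1) insert.hyps(2) by auto
  have ax: "a y \<noteq> b x" if "y \<in> insert x S" for y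
    using insert.prems(2) that by blast
  have "t3_reduces V (Q \<union> (\<lambda>x. {a x, b x}) ` S) ?f Q (\<lambda>y. if y \<in> b ` S then ?f y - 1 else ?f y)"
    using insert.prems ax by (intro insert.IH) (auto intro: inj_on_subset)
  moreover have "(\<lambda>y. if y \<in> b ` S then ?f y - 1 else ?f y)
      = (\<lambda>y. if y \<in> b ` insert x S then f y - 1 else f y)"
    using bx insert.prems(3) by auto
  moreover have "{a x, b x} \<notin> (\<lambda>x. {a x, b x}) ` S"
  proof
    assume "{a x, b x} \<in> (\<lambda>x. {a x, b x}) ` S"
    then obtain y where "y \<in> S" "{a x, b x} = {a y, b y}" by blast
    then have "b x = a y \<or> b x = b y" by (metis doubleton_eq_iff)
    then show False using ax[of y] bx \<open>y \<in> S\<close> by auto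
  qed
  then have "(Q \<union> (\<lambda>x. {a x, b x}) ` insert x S) - {{b x, a x}} = Q \<union> (\<lambda>x. {a x, b x}) ` S"
    using insert.prems(4) by (auto simp: insert_commute)
  ultimately have reduces: "t3_reduces V ((Q \<union> (\<lambda>x. {a x, b x}) ` insert x S) - {{b x, a x}}) ?f Q
      (\<lambda>y. if y \<in> b ` insert x S then f y - 1 else f y)"
    by simp
  have "{b x, a x} \<in> Q \<union> (\<lambda>x. {a x, b x}) ` insert x S"
    by (auto simp: insert_commute)
  moreover have "b x \<noteq> a x"
    using ax[of x] by auto
  ultimately show ?case
    using reduces by (rule t3_reduces.edge_delete)
qed

lemma t3_reduces_degenerate_copy:
  assumes "strict_t3_degenerate H EH h" "simple_graph H EH" "\<forall>x\<in>H. \<psi> (\<phi> x) = x"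
    "\<phi> ` H \<subseteq> V" "\<forall>e\<in>EH. \<phi> ` e \<notin> R" "\<forall>x\<in>H. h x \<le> F (\<phi> x)"
  shows "t3_reduces V (R \<union> (`) \<phi> ` EH) F R (override_on F (\<lambda>_. 1) (\<phi> ` H))"
proof -
  obtain h' where h': "t3_reduces H EH h {} h'" "\<forall>x\<in>H. 0 < h' x"
    using assms(1)[unfolded strict_t3_degenerate_iff_reduces] by blast
  have fin: "finite (\<phi> ` H)"
    using assms(2) by (simp add: simple_graph_def)
  have "t3_reduces V (R \<union> (`) \<phi> ` EH) F (R \<union> (`) \<phi> ` EH) (override_on F (h \<circ> \<psi>) (\<phi> ` H))"
    using assms(3,6) by (intro t3_reduces_lower[OF fin assms(4)]) auto
  moreover have "t3_reduces V (R \<union> (`) \<phi> ` EH) (override_on F (h \<circ> \<psi>) (\<phi> ` H))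
      (R \<union> (`) \<phi> ` {}) (override_on F (h' \<circ> \<psi>) (\<phi> ` H))"
    using assms(3,4,5) simple_graph_edge_subset[OF assms(2)]
    by (intro t3_reduces_embed[OF h'(1)]) auto
  moreover have "t3_reduces V R (override_on F (h' \<circ> \<psi>) (\<phi> ` H)) R (override_on F (\<lambda>_. 1) (\<phi> ` H))"
    using assms(3) h'(2) by (intro t3_reduces_lower[OF fin assms(4)]) auto
  ultimately show ?thesis
    by (auto intro: t3_reduces_trans)
qed

section \<open>The blow-up\<close>

definition dlists :: "'a set \<Rightarrow> 'a list set" where
  "dlists X = {\<sigma>. distinct \<sigma> \<and> set \<sigma> \<subseteq> X}"

definition copy_edges :: "'a set set \<Rightarrow> 'b set \<Rightarrow> ('b \<times> 'a) set set" where
  "copy_edges EH S = {Pair \<sigma> ` e | \<sigma> e. \<sigma> \<in> S \<and> e \<in> EH}"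

definition link_edges :: "'a list set \<Rightarrow> ('a list \<times> 'a) set set" where
  "link_edges S = {{(\<rho>, x), (\<rho> @ x # \<tau>, x)} | \<rho> x \<tau>. \<rho> @ x # \<tau> \<in> S}"

definition blowup_vertices :: "'a set \<Rightarrow> 'a set \<Rightarrow> ('a list \<times> 'a) set" where
  "blowup_vertices H X = dlists X \<times> H"

definition blowup_edges :: "'a set set \<Rightarrow> 'a set \<Rightarrow> ('a list \<times> 'a) set set" where
  "blowup_edges EH X = copy_edges EH (dlists X) \<union> link_edges (dlists X)"

definition blowup_weight :: "('a \<Rightarrow> int) \<Rightarrow> 'a set \<Rightarrow> 'a list \<times> 'a \<Rightarrow> int" where
  "blowup_weight h X p = h (snd p) + of_bool (snd p \<in> X)"

definition prefix_before :: "'a list \<Rightarrow> 'a \<Rightarrow> 'a list" where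
  "prefix_before \<sigma> x = takeWhile (\<lambda>y. y \<noteq> x) \<sigma>"

definition slice :: "('b \<times> 'a) set \<Rightarrow> 'b \<Rightarrow> 'a set" where
  "slice A \<sigma> = {v. (\<sigma>, v) \<in> A}"

lemma dlists_appendD: "\<rho> @ \<tau> \<in> dlists X \<Longrightarrow> \<rho> \<in> dlists X"
  unfolding dlists_def by auto

lemma finite_dlists: "finite X \<Longrightarrow> finite (dlists X)"
  unfolding dlists_def using finite_subset_distinct by (simp add: conj_commute)

lemma prefix_before_eq: "x \<notin> set \<rho> \<Longrightarrow> prefix_before (\<rho> @ x # \<tau>) x = \<rho>"
  unfolding prefix_before_def by (subst takeWhile_append2) auto

lemma prefix_before_split:
  assumes "x \<in> set \<sigma>"
  obtains \<tau> where "prefix_before \<sigma> x @ x # \<tau> = \<sigma>"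
proof -
  obtain \<rho> \<tau> where "\<sigma> = \<rho> @ x # \<tau>" "x \<notin> set \<rho>"
    using split_list_first[OF assms] by blast
  then show ?thesis
    using that prefix_before_eq by metis
qed

lemma length_prefix_before:
  assumes "x \<in> set \<sigma>"
  shows "length (prefix_before \<sigma> x) < length \<sigma>"
proof -
  obtain \<tau> where "prefix_before \<sigma> x @ x # \<tau> = \<sigma>"
    using prefix_before_split[OF assms] .
  from arg_cong[OF this, of length] show ?thesis by simp
qed

lemma prefix_before_in_dlists:
  assumes "\<sigma> \<in> dlists X" "x \<in> set \<sigma>"
  shows "prefix_before \<sigma> x \<in> dlists X"
proof -
  obtain \<tau> where "prefix_before \<sigma> x @ x # \<tau> = \<sigma>"
    using prefix_before_split[OF assms(2)] .
  then show ?thesis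
    using assms(1) dlists_appendD[of "prefix_before \<sigma> x" "x # \<tau>" X] by auto
qed

lemma link_edges_singleton:
  assumes "distinct \<sigma>"
  shows "link_edges {\<sigma>} = (\<lambda>x. {(prefix_before \<sigma> x, x), (\<sigma>, x)}) ` set \<sigma>"
proof (intro equalityI subsetI)
  fix e assume "e \<in> link_edges {\<sigma>}"
  then obtain \<rho> x \<tau> where \<sigma>: "\<rho> @ x # \<tau> = \<sigma>" and e: "e = {(\<rho>, x), (\<sigma>, x)}"
    unfolding link_edges_def by auto
  have "prefix_before \<sigma> x = \<rho>"
    using assms prefix_before_eq[of x \<rho> \<tau>] unfolding \<sigma>[symmetric] by simp
  moreover have "x \<in> set \<sigma>"
    unfolding \<sigma>[symmetric] by simp
  ultimately show "e \<in> (\<lambda>x. {(prefix_before \<sigma> x, x), (\<sigma>, x)}) ` set \<sigma>"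
    using e by blast
next
  fix e assume "e \<in> (\<lambda>x. {(prefix_before \<sigma> x, x), (\<sigma>, x)}) ` set \<sigma>"
  then obtain x where x: "x \<in> set \<sigma>" "e = {(prefix_before \<sigma> x, x), (\<sigma>, x)}"
    by blast
  obtain \<tau> where "prefix_before \<sigma> x @ x # \<tau> = \<sigma>"
    using prefix_before_split[OF x(1)] .
  then show "e \<in> link_edges {\<sigma>}"
    unfolding link_edges_def using x(2)
    by (intro CollectI exI[of _ "prefix_before \<sigma> x"] exI[of _ x] exI[of _ \<tau>]) simp
qed

lemma copy_edges_singleton: "copy_edges EH {\<sigma>} = (`) (Pair \<sigma>) ` EH"
  unfolding copy_edges_def by blast

lemma copy_edges_insert: "copy_edges EH (insert \<sigma> S) = (`) (Pair \<sigma>) ` EH \<union> copy_edges EH S"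
  unfolding copy_edges_def by blast

lemma link_edges_insert:
  assumes "distinct \<sigma>"
  shows "link_edges (insert \<sigma> S) = (\<lambda>x. {(prefix_before \<sigma> x, x), (\<sigma>, x)}) ` set \<sigma> \<union> link_edges S"
proof -
  have "link_edges (insert \<sigma> S) = link_edges {\<sigma>} \<union> link_edges S"
    unfolding link_edges_def by blast
  then show ?thesis
    unfolding link_edges_singleton[OF assms] .
qed

lemma link_edgesE:
  assumes "{a, b} \<in> link_edges S"
  obtains \<rho> x \<tau> where "\<rho> @ x # \<tau> \<in> S" "{a, b} = {(\<rho>, x), (\<rho> @ x # \<tau>, x)}"
  using assms unfolding link_edges_def by blast

lemma link_edge_fst_neq: "{a, b} \<in> link_edges S \<Longrightarrow> fst a \<noteq> fst b"
  by (erule link_edgesE) (auto simp: doubleton_eq_iff)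

lemma link_edge_other_end:
  assumes "e \<in> link_edges S" "u \<in> e"
  obtains d where "e = {u, d}" "fst d \<noteq> fst u"
proof -
  obtain \<rho> x \<tau> where e: "e = {(\<rho>, x), (\<rho> @ x # \<tau>, x)}"
    using assms(1) unfolding link_edges_def by blast
  from assms(2) consider "u = (\<rho>, x)" | "u = (\<rho> @ x # \<tau>, x)"
    unfolding e by blast
  then show ?thesis
  proof cases
    case 1
    then show ?thesis using that[of "(\<rho> @ x # \<tau>, x)"] e by simp
  next
    case 2
    then show ?thesis using that[of "(\<rho>, x)"] e by (simp add: insert_commute)
  qed
qed

lemma copy_edge_fst_eq: "e \<in> copy_edges EH S \<Longrightarrow> a \<in> e \<Longrightarrow> b \<in> e \<Longrightarrow> fst a = fst b"
  unfolding copy_edges_def by auto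

lemma Pair_image_in_copy_edges:
  assumes "Pair \<sigma> ` e \<in> copy_edges EH S" "e \<noteq> {}"
  shows "\<sigma> \<in> S"
proof -
  obtain \<rho> e' where "\<rho> \<in> S" "Pair \<sigma> ` e = Pair \<rho> ` e'"
    using assms(1) unfolding copy_edges_def by blast
  moreover obtain x where "x \<in> e" using assms(2) by blast
  ultimately show ?thesis by auto
qed

lemma copy_link_edges_remove:
  assumes "\<sigma> \<in> U" "distinct \<sigma>"
  shows "copy_edges EH U \<union> link_edges U
    = (copy_edges EH (U - {\<sigma>}) \<union> link_edges (U - {\<sigma>}) \<union> (`) (Pair \<sigma>) ` EH)
      \<union> (\<lambda>x. {(prefix_before \<sigma> x, x), (\<sigma>, x)}) ` set \<sigma>"
proof -
  have "copy_edges EH U \<union> link_edges U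
      = copy_edges EH (insert \<sigma> (U - {\<sigma>})) \<union> link_edges (insert \<sigma> (U - {\<sigma>}))"
    by (simp add: insert_absorb assms(1))
  also have "\<dots> = (copy_edges EH (U - {\<sigma>}) \<union> link_edges (U - {\<sigma>}) \<union> (`) (Pair \<sigma>) ` EH)
      \<union> (\<lambda>x. {(prefix_before \<sigma> x, x), (\<sigma>, x)}) ` set \<sigma>"
    unfolding copy_edges_insert link_edges_insert[OF assms(2)] by blast
  finally show ?thesis .
qed

lemma link_edge_prefix_before_in:
  assumes "{(prefix_before \<sigma> x, x), (\<sigma>, x)} \<in> link_edges S" "x \<in> set \<sigma>"
  shows "\<sigma> \<in> S"
proof -
  obtain \<rho> y \<tau> where S: "\<rho> @ y # \<tau> \<in> S"
    and eq: "{(prefix_before \<sigma> x, x), (\<sigma>, x)} = {(\<rho>, y), (\<rho> @ y # \<tau>, y)}"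
    using assms(1) by (rule link_edgesE)
  have "length (prefix_before \<sigma> x) < length \<sigma>"
    using length_prefix_before[OF assms(2)] .
  then have "\<sigma> = \<rho> @ y # \<tau>"
    using eq by (auto simp: doubleton_eq_iff)
  then show ?thesis using S by simp
qed

lemma prefix_link_notin:
  assumes "x \<in> set \<sigma>" "\<sigma> \<notin> S"
  shows "{(prefix_before \<sigma> x, x), (\<sigma>, x)} \<notin> copy_edges EH S' \<union> link_edges S \<union> (`) (Pair \<sigma>) ` EH"
proof -
  have "prefix_before \<sigma> x \<noteq> \<sigma>"
    using length_prefix_before[OF assms(1)] by auto
  then have "{(prefix_before \<sigma> x, x), (\<sigma>, x)} \<notin> copy_edges EH T" for T
    using copy_edge_fst_eq[of _ EH T "(prefix_before \<sigma> x, x)" "(\<sigma>, x)"] by auto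
  moreover have "{(prefix_before \<sigma> x, x), (\<sigma>, x)} \<notin> link_edges S"
  proof
    assume "{(prefix_before \<sigma> x, x), (\<sigma>, x)} \<in> link_edges S"
    from link_edge_prefix_before_in[OF this assms(1)] show False
      using assms(2) by simp
  qed
  moreover have "{(prefix_before \<sigma> x, x), (\<sigma>, x)} \<notin> (`) (Pair \<sigma>) ` EH"
    using calculation(1)[of "{\<sigma>}"] unfolding copy_edges_singleton .
  ultimately show ?thesis
    by simp
qed

lemma Pair_image_notin_copy_link_edges:
  assumes "\<sigma> \<notin> S" "u \<noteq> v"
  shows "Pair \<sigma> ` {u, v} \<notin> copy_edges EH S \<union> link_edges S'"
proof -
  have "Pair \<sigma> ` {u, v} \<notin> copy_edges EH S"
    using Pair_image_in_copy_edges[of \<sigma> "{u, v}" EH S] assms(1) by auto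
  moreover have "Pair \<sigma> ` {u, v} \<notin> link_edges S'"
    using link_edge_fst_neq[of "(\<sigma>, u)" "(\<sigma>, v)" S'] by auto
  ultimately show ?thesis
    by simp
qed

lemma of_bool_nonempty_le_sum:
  fixes f :: "'a \<Rightarrow> int"
  assumes "finite A" "\<forall>x\<in>A. 1 \<le> f x"
  shows "of_bool (A \<noteq> {}) \<le> sum f A"
proof -
  have "int (card A) \<le> sum f A"
    using sum_bounded_below[of A 1 f] assms(2) by simp
  moreover have "A \<noteq> {} \<Longrightarrow> 1 \<le> card A"
    using assms(1) by (simp add: Suc_le_eq card_gt_0_iff)
  ultimately show ?thesis
    by (cases "A = {}") auto
qed

text \<open>If \<open>(\<rho>, x)\<close> is not in \<open>C\<close>, then \<open>(\<rho> x \<tau>, x)\<close> is, for every extension of \<open>\<rho> x\<close>;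
  so a word can be extended letter by letter until all of its copy lies in \<open>C\<close>.\<close>

lemma exists_dlist_covered_extension:
  assumes "finite X" and cover: "\<forall>\<rho> x \<tau>. \<rho> @ x # \<tau> \<in> dlists X \<longrightarrow> (\<rho>, x) \<in> C \<or> (\<rho> @ x # \<tau>, x) \<in> C"
    and "\<rho> \<in> dlists X" and "\<forall>x\<in>set \<rho>. \<forall>\<sigma>. \<rho> @ \<sigma> \<in> dlists X \<longrightarrow> (\<rho> @ \<sigma>, x) \<in> C"
  shows "\<exists>\<sigma>. \<rho> @ \<sigma> \<in> dlists X \<and> Pair (\<rho> @ \<sigma>) ` X \<subseteq> C"
  using assms(3,4)
proof (induction "card X - length \<rho>" arbitrary: \<rho> rule: less_induct)
  case less
  show ?case
  proof (cases "Pair \<rho> ` X \<subseteq> C")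
    case True
    then show ?thesis using less.prems(1) by (intro exI[of _ "[]"]) simp
  next
    case False
    then obtain x where x: "x \<in> X" "(\<rho>, x) \<notin> C" by blast
    have "x \<notin> set \<rho>"
      using less.prems x(2) by (metis append_Nil2)
    then have \<rho>': "\<rho> @ [x] \<in> dlists X"
      using less.prems(1) x(1) unfolding dlists_def by simp
    have "length \<rho> < card X"
      using distinct_card[of "\<rho> @ [x]"] card_mono[OF assms(1), of "set (\<rho> @ [x])"] \<rho>'
      unfolding dlists_def by simp
    moreover have "\<forall>y\<in>set (\<rho> @ [x]). \<forall>\<sigma>. \<rho> @ [x] @ \<sigma> \<in> dlists X \<longrightarrow> (\<rho> @ [x] @ \<sigma>, y) \<in> C"
    proof (intro ballI allI impI)
      fix y \<sigma> assume y: "y \<in> set (\<rho> @ [x])" and \<sigma>: "\<rho> @ [x] @ \<sigma> \<in> dlists X"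
      show "(\<rho> @ [x] @ \<sigma>, y) \<in> C"
      proof (cases "y = x")
        case True
        then show ?thesis using cover \<sigma> x(2) by fastforce
      next
        case False
        then show ?thesis using less.prems(2) y \<sigma> by simp
      qed
    qed
    ultimately obtain \<sigma> where "\<rho> @ [x] @ \<sigma> \<in> dlists X" "Pair (\<rho> @ [x] @ \<sigma>) ` X \<subseteq> C"
      using less.hyps[of "\<rho> @ [x]"] \<rho>' by fastforce
    then show ?thesis by (intro exI[of _ "x # \<sigma>"]) simp
  qed
qed

locale graph_blowup =
  fixes H :: "'a set" and EH :: "'a set set" and X :: "'a set"
  assumes simple: "simple_graph H EH" and X_subset: "X \<subseteq> H"
begin

lemma finite_dlists_blowup: "finite (dlists X)"
proof -
  have "finite H" using simple by (simp add: simple_graph_def)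
  then show ?thesis using finite_subset[OF X_subset] finite_dlists by blast
qed

lemma simple_graph_blowup: "simple_graph (blowup_vertices H X) (blowup_edges EH X)"
  unfolding simple_graph_def
proof (intro conjI ballI)
  show "finite (blowup_vertices H X)"
    using finite_dlists_blowup simple unfolding blowup_vertices_def simple_graph_def by simp
  fix e assume "e \<in> blowup_edges EH X"
  then consider (copy) \<sigma> e0 where "\<sigma> \<in> dlists X" "e0 \<in> EH" "e = Pair \<sigma> ` e0"
    | (link) \<rho> x \<tau> where "\<rho> @ x # \<tau> \<in> dlists X" "e = {(\<rho>, x), (\<rho> @ x # \<tau>, x)}"
    unfolding blowup_edges_def copy_edges_def link_edges_def by blast
  then show "\<exists>a b. a \<noteq> b \<and> a \<in> blowup_vertices H X \<and> b \<in> blowup_vertices H X \<and> e = {a, b}"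
  proof cases
    case copy
    obtain u v where "u \<noteq> v" "u \<in> H" "v \<in> H" "e0 = {u, v}"
      using simple copy(2) by (rule simple_graph_edgeE)
    then show ?thesis
      using copy(1,3) unfolding blowup_vertices_def
      by (intro exI[of _ "(\<sigma>, u)"] exI[of _ "(\<sigma>, v)"]) simp
  next
    case link
    have "\<rho> \<in> dlists X" "x \<in> H"
      using link(1) dlists_appendD X_subset unfolding dlists_def by auto
    then show ?thesis
      using link unfolding blowup_vertices_def
      by (intro exI[of _ "(\<rho>, x)"] exI[of _ "(\<rho> @ x # \<tau>, x)"]) simp
  qed
qed

section \<open>Degeneracy of the blow-up\<close>

lemma t3_reduces_blowup_copy:
  assumes deg: "strict_t3_degenerate H EH h"
    and \<sigma>: "\<sigma> \<in> U" "U \<subseteq> dlists X" "\<forall>\<tau>\<in>U. length \<sigma> \<le> length \<tau>"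
    and F_copy: "\<forall>v\<in>H. F (\<sigma>, v) = blowup_weight h X (\<sigma>, v)"
    and F_done: "\<forall>\<rho>\<in>dlists X - U. \<forall>v\<in>H. F (\<rho>, v) = 1"
  shows "t3_reduces (blowup_vertices H X) (copy_edges EH U \<union> link_edges U) F
           (copy_edges EH (U - {\<sigma>}) \<union> link_edges (U - {\<sigma>})) (override_on F (\<lambda>_. 1) (Pair \<sigma> ` H))"
proof -
  let ?V = "blowup_vertices H X"
  let ?R = "copy_edges EH (U - {\<sigma>}) \<union> link_edges (U - {\<sigma>})"
  let ?F1 = "\<lambda>y. if y \<in> Pair \<sigma> ` set \<sigma> then F y - 1 else F y"
  have \<sigma>X: "distinct \<sigma>" "set \<sigma> \<subseteq> X"
    using \<sigma>(1,2) unfolding dlists_def by auto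
  have prefix_done: "prefix_before \<sigma> x \<in> dlists X - U" if x: "x \<in> set \<sigma>" for x
  proof -
    have "prefix_before \<sigma> x \<in> dlists X"
      using prefix_before_in_dlists[OF _ x] \<sigma>(1,2) by blast
    moreover have "prefix_before \<sigma> x \<notin> U"
      using \<sigma>(3) length_prefix_before[OF x] by (metis leD)
    ultimately show ?thesis by blast
  qed
  have "t3_reduces ?V ((?R \<union> (`) (Pair \<sigma>) ` EH) \<union> (\<lambda>x. {(prefix_before \<sigma> x, x), (\<sigma>, x)}) ` set \<sigma>) F
      (?R \<union> (`) (Pair \<sigma>) ` EH) ?F1"
  proof (rule t3_reduces_delete_matching[where a = "\<lambda>x. (prefix_before \<sigma> x, x)" and b = "Pair \<sigma>"])
    show "\<forall>x\<in>set \<sigma>. (prefix_before \<sigma> x, x) \<notin> Pair \<sigma> ` set \<sigma>"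
      using length_prefix_before by fastforce
    show "\<forall>x\<in>set \<sigma>. F (prefix_before \<sigma> x, x) = 1"
      using F_done prefix_done \<sigma>X(2) X_subset by blast
    show "\<forall>x\<in>set \<sigma>. {(prefix_before \<sigma> x, x), (\<sigma>, x)} \<notin> ?R \<union> (`) (Pair \<sigma>) ` EH"
      using prefix_link_notin[of _ \<sigma> "U - {\<sigma>}" EH "U - {\<sigma>}"] by blast
  qed (auto simp: inj_on_def)
  moreover have "t3_reduces ?V (?R \<union> (`) (Pair \<sigma>) ` EH) ?F1 ?R (override_on ?F1 (\<lambda>_. 1) (Pair \<sigma> ` H))"
  proof (rule t3_reduces_degenerate_copy[OF deg simple, where \<psi> = snd])
    show "Pair \<sigma> ` H \<subseteq> ?V"
      using \<sigma>(1,2) unfolding blowup_vertices_def by auto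
    show "\<forall>e\<in>EH. Pair \<sigma> ` e \<notin> ?R"
    proof
      fix e assume "e \<in> EH"
      obtain u v where "u \<noteq> v" "e = {u, v}"
        using simple \<open>e \<in> EH\<close> by (rule simple_graph_edgeE)
      then show "Pair \<sigma> ` e \<notin> ?R"
        using Pair_image_notin_copy_link_edges[of \<sigma> "U - {\<sigma>}" u v EH "U - {\<sigma>}"] by simp
    qed
    show "\<forall>v\<in>H. h v \<le> ?F1 (\<sigma>, v)"
      using F_copy \<sigma>X(2) by (auto simp: blowup_weight_def)
  qed simp
  moreover have "override_on ?F1 (\<lambda>_. 1) (Pair \<sigma> ` H) = override_on F (\<lambda>_. 1) (Pair \<sigma> ` H)"
  proof -
    have "Pair \<sigma> ` set \<sigma> \<subseteq> Pair \<sigma> ` H"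
      using \<sigma>X(2) X_subset by auto
    then show ?thesis
      by (auto simp: override_on_def fun_eq_iff)
  qed
  ultimately show ?thesis
    unfolding copy_link_edges_remove[OF \<sigma>(1) \<sigma>X(1)] by (auto intro: t3_reduces_trans)
qed

lemma strict_t3_degenerate_blowup_copies:
  assumes deg: "strict_t3_degenerate H EH h" and "U \<subseteq> dlists X"
    and "\<forall>\<sigma>\<in>U. \<forall>v\<in>H. F (\<sigma>, v) = blowup_weight h X (\<sigma>, v)"
    and "\<forall>\<sigma>\<in>dlists X - U. \<forall>v\<in>H. F (\<sigma>, v) = 1"
  shows "strict_t3_degenerate (blowup_vertices H X) (copy_edges EH U \<union> link_edges U) F"
proof -
  have "finite U"
    using finite_subset[OF assms(2) finite_dlists_blowup] .
  then show ?thesis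
    using assms(2-4)
  proof (induction U arbitrary: F rule: finite_psubset_induct)
    case (psubset U F)
    show ?case
    proof (cases "U = {}")
      case True
      then have "copy_edges EH U \<union> link_edges U = {}"
        by (simp add: copy_edges_def link_edges_def)
      moreover have "\<forall>y\<in>blowup_vertices H X. 0 < F y"
        using psubset.prems(3) True by (auto simp: blowup_vertices_def)
      ultimately show ?thesis
        by (simp add: strict_t3_degenerate.finish)
    next
      case False
      then obtain \<sigma>0 where "\<sigma>0 \<in> U" by blast
      then obtain \<sigma> where \<sigma>: "\<sigma> \<in> U" "\<forall>\<tau>\<in>U. length \<sigma> \<le> length \<tau>"
        using ex_has_least_nat[of "\<lambda>\<sigma>. \<sigma> \<in> U" \<sigma>0 length] by blast
      let ?F = "override_on F (\<lambda>_. 1) (Pair \<sigma> ` H)"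
      have "strict_t3_degenerate (blowup_vertices H X) (copy_edges EH (U - {\<sigma>}) \<union> link_edges (U - {\<sigma>})) ?F"
      proof (rule psubset.IH)
        show "U - {\<sigma>} \<subset> U" "U - {\<sigma>} \<subseteq> dlists X"
          using \<sigma>(1) psubset.prems(1) by auto
        show "\<forall>\<tau>\<in>U - {\<sigma>}. \<forall>v\<in>H. ?F (\<tau>, v) = blowup_weight h X (\<tau>, v)"
          using psubset.prems(2) by (auto simp: override_on_def)
        show "\<forall>\<tau>\<in>dlists X - (U - {\<sigma>}). \<forall>v\<in>H. ?F (\<tau>, v) = 1"
          using psubset.prems(3) by (auto simp: override_on_def)
      qed
      moreover have "t3_reduces (blowup_vertices H X) (copy_edges EH U \<union> link_edges U) F
          (copy_edges EH (U - {\<sigma>}) \<union> link_edges (U - {\<sigma>})) ?F"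
        using psubset.prems \<sigma>(1) by (intro t3_reduces_blowup_copy[OF deg \<sigma>(1) _ \<sigma>(2)]) auto
      ultimately show ?thesis
        by (rule strict_t3_degenerate_if_reduces[rotated])
    qed
  qed
qed

lemma strict_t3_degenerate_blowup:
  assumes "strict_t3_degenerate H EH h"
  shows "strict_t3_degenerate (blowup_vertices H X) (blowup_edges EH X) (blowup_weight h X)"
  unfolding blowup_edges_def by (rule strict_t3_degenerate_blowup_copies[OF assms]) auto

section \<open>Non-removability of the blow-up\<close>

text \<open>A removal sequence of the blow-up is simulated copy by copy: \<open>q \<sigma>\<close> is the current
  weight function of the sequence run in copy \<open>\<sigma>\<close>, and \<open>C\<close> is the set of spent vertices,
  whose extra unit of weight has been used up.\<close>

definition weight_bound ::
    "('a list \<times> 'a) set \<Rightarrow> ('a list \<times> 'a \<Rightarrow> int) \<Rightarrow> ('a list \<Rightarrow> 'a \<Rightarrow> int) \<Rightarrow> ('a list \<times> 'a) set \<Rightarrow> bool"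
  where "weight_bound Vs f q C \<longleftrightarrow>
    (\<forall>\<sigma> v. (\<sigma>, v) \<in> Vs \<longrightarrow> f (\<sigma>, v) \<le> q \<sigma> v + of_bool (v \<in> X \<and> (\<sigma>, v) \<notin> C))"

definition links_covered :: "('a list \<times> 'a) set \<Rightarrow> ('a list \<times> 'a) set \<Rightarrow> bool" where
  "links_covered Vs C \<longleftrightarrow> (\<forall>e\<in>link_edges (dlists X). \<not> e \<subseteq> Vs \<longrightarrow> e \<inter> C \<noteq> {})"

definition spent_after ::
    "('b \<times> 'a) set set \<Rightarrow> 'b \<times> 'a \<Rightarrow> ('b \<times> 'a) set \<Rightarrow> ('b \<times> 'a) set \<Rightarrow> ('b \<times> 'a) set"
  where "spent_after E u W C = C \<union> {w \<in> nbhd E u - W. fst w \<noteq> fst u}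
    \<union> (if \<exists>w\<in>W. fst w \<noteq> fst u then {u} else {})"

text \<open>In its own copy the deleted vertex saves only those neighbours whose simulated weight
  does not exceed their actual weight; the others can afford to lose one unit.\<close>

definition copy_saved :: "('b \<times> 'a) set \<Rightarrow> ('b \<times> 'a \<Rightarrow> int) \<Rightarrow> ('b \<Rightarrow> 'a \<Rightarrow> int) \<Rightarrow> 'b \<Rightarrow> 'a set"
  where "copy_saved W f q \<sigma> = {v. (\<sigma>, v) \<in> W \<and> q \<sigma> v \<le> f (\<sigma>, v)}"

lemma weight_bound_cong:
  assumes "C \<inter> Vs = C' \<inter> Vs"
  shows "weight_bound Vs f q C = weight_bound Vs f q C'"
proof -
  have "(\<sigma>, v) \<in> C \<longleftrightarrow> (\<sigma>, v) \<in> C'" if "(\<sigma>, v) \<in> Vs" for \<sigma> v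
    using assms that by blast
  then show ?thesis
    unfolding weight_bound_def by auto
qed

lemma blowup_edge_same_copy_iff:
  "{(\<sigma>, u), (\<sigma>, v)} \<in> blowup_edges EH X \<longleftrightarrow> \<sigma> \<in> dlists X \<and> {u, v} \<in> EH"
proof
  assume e: "{(\<sigma>, u), (\<sigma>, v)} \<in> blowup_edges EH X"
  have "{(\<sigma>, u), (\<sigma>, v)} \<notin> link_edges (dlists X)"
    using link_edge_fst_neq[of "(\<sigma>, u)" "(\<sigma>, v)" "dlists X"] by auto
  then obtain \<rho> e0 where \<rho>: "\<rho> \<in> dlists X" "e0 \<in> EH" and eq: "{(\<sigma>, u), (\<sigma>, v)} = Pair \<rho> ` e0"
    using e unfolding blowup_edges_def copy_edges_def by blast
  have "(\<sigma>, u) \<in> Pair \<rho> ` e0"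
    using eq by blast
  then have "\<sigma> = \<rho>" by blast
  have "e0 = snd ` Pair \<rho> ` e0"
    by (simp add: image_image)
  also have "\<dots> = {u, v}"
    unfolding eq[symmetric] by simp
  finally show "\<sigma> \<in> dlists X \<and> {u, v} \<in> EH"
    using \<rho> \<open>\<sigma> = \<rho>\<close> by simp
next
  assume "\<sigma> \<in> dlists X \<and> {u, v} \<in> EH"
  moreover have "{(\<sigma>, u), (\<sigma>, v)} = Pair \<sigma> ` {u, v}" by simp
  ultimately show "{(\<sigma>, u), (\<sigma>, v)} \<in> blowup_edges EH X"
    unfolding blowup_edges_def copy_edges_def by blast
qed

lemma nbhd_induced_blowup:
  assumes "Vs \<subseteq> blowup_vertices H X" "(\<sigma>, u) \<in> Vs"
  shows "(\<sigma>, v) \<in> nbhd (induced (blowup_edges EH X) Vs) (\<sigma>, u) \<longleftrightarrow> v \<in> nbhd (induced EH (slice Vs \<sigma>)) u"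
proof -
  have "\<sigma> \<in> dlists X"
    using assms unfolding blowup_vertices_def by auto
  then show ?thesis
    using assms(2) blowup_edge_same_copy_iff[of \<sigma> u v] unfolding nbhd_def induced_def slice_def by auto
qed

lemma weight_bound_delsave:
  assumes Vs: "Vs \<subseteq> blowup_vertices H X" and E: "E = induced (blowup_edges EH X) Vs"
    and u: "(\<sigma>0, u0) \<in> Vs" and bound: "weight_bound Vs f q C"
  shows "weight_bound (Vs - {(\<sigma>0, u0)}) (delsave_fun E f (\<sigma>0, u0) W)
     (q(\<sigma>0 := delsave_fun (induced EH (slice Vs \<sigma>0)) (q \<sigma>0) u0 (copy_saved W f q \<sigma>0)))
     (spent_after E (\<sigma>0, u0) W C)"
proof -
  let ?q = "q(\<sigma>0 := delsave_fun (induced EH (slice Vs \<sigma>0)) (q \<sigma>0) u0 (copy_saved W f q \<sigma>0))"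
  let ?C = "C \<union> {w \<in> nbhd E (\<sigma>0, u0) - W. fst w \<noteq> \<sigma>0}"
  have "delsave_fun E f (\<sigma>0, u0) W (\<sigma>, v) \<le> ?q \<sigma> v + of_bool (v \<in> X \<and> (\<sigma>, v) \<notin> ?C)"
    if "(\<sigma>, v) \<in> Vs" for \<sigma> v
  proof -
    have old: "f (\<sigma>, v) \<le> q \<sigma> v + of_bool (v \<in> X \<and> (\<sigma>, v) \<notin> C)"
      using bound that unfolding weight_bound_def by auto
    show ?thesis
    proof (cases "\<sigma> = \<sigma>0")
      case True
      have "(\<sigma>0, v) \<in> nbhd E (\<sigma>0, u0) \<longleftrightarrow> v \<in> nbhd (induced EH (slice Vs \<sigma>0)) u0"
        using nbhd_induced_blowup[OF Vs u] E by simp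
      then show ?thesis
        using old True by (auto simp: delsave_fun_def copy_saved_def)
    next
      case False
      then show ?thesis
        using old by (auto simp: delsave_fun_def of_bool_def split: if_splits)
    qed
  qed
  then have bound': "weight_bound (Vs - {(\<sigma>0, u0)}) (delsave_fun E f (\<sigma>0, u0) W) ?q ?C"
    unfolding weight_bound_def by blast
  have "spent_after E (\<sigma>0, u0) W C \<inter> (Vs - {(\<sigma>0, u0)}) = ?C \<inter> (Vs - {(\<sigma>0, u0)})"
    unfolding spent_after_def by auto
  from weight_bound_cong[OF this] bound' show ?thesis
    by simp
qed

lemma links_covered_delsave:
  assumes E: "E = induced (blowup_edges EH X) Vs" and u: "u \<in> Vs" and cov: "links_covered Vs C"
  shows "links_covered (Vs - {u}) (spent_after E u W C)"
  unfolding links_covered_def spent_after_def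
proof (intro ballI impI)
  fix e assume e: "e \<in> link_edges (dlists X)" and out: "\<not> e \<subseteq> Vs - {u}"
  show "e \<inter> (C \<union> {w \<in> nbhd E u - W. fst w \<noteq> fst u}
           \<union> (if \<exists>w\<in>W. fst w \<noteq> fst u then {u} else {})) \<noteq> {}"
  proof (cases "e \<subseteq> Vs")
    case False
    then have "e \<inter> C \<noteq> {}"
      using cov e unfolding links_covered_def by blast
    then show ?thesis by blast
  next
    case True
    then have "u \<in> e"
      using out by blast
    obtain d where d: "e = {u, d}" "fst d \<noteq> fst u"
      using e \<open>u \<in> e\<close> by (rule link_edge_other_end)
    then have "d \<in> nbhd E u"
      using E True e unfolding nbhd_def induced_def blowup_edges_def by auto
    show ?thesis
    proof (cases "d \<in> W")
      case True
      then have "\<exists>w\<in>W. fst w \<noteq> fst u"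
        using d(2) by blast
      then show ?thesis
        using d(1) by auto
    next
      case False
      then show ?thesis
        using d \<open>d \<in> nbhd E u\<close> by auto
    qed
  qed
qed

lemma slice_delsave_surplus:
  assumes Vs: "Vs \<subseteq> blowup_vertices H X" and E: "E = induced (blowup_edges EH X) Vs"
    and u: "(\<sigma>0, u0) \<in> Vs" and W: "W \<subseteq> nbhd E (\<sigma>0, u0)" and surplus: "sum f W < f (\<sigma>0, u0)"
    and legal: "\<forall>x\<in>Vs - {(\<sigma>0, u0)}. 1 \<le> delsave_fun E f (\<sigma>0, u0) W x"
    and bound: "weight_bound Vs f q C"
    and spent: "u0 \<in> X \<and> (\<sigma>0, u0) \<notin> C \<longrightarrow> (\<exists>w\<in>W. fst w \<noteq> \<sigma>0)"
  shows "sum (q \<sigma>0) (copy_saved W f q \<sigma>0) < q \<sigma>0 u0"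
proof -
  let ?WH = "copy_saved W f q \<sigma>0"
  let ?Win = "W \<inter> {w. fst w = \<sigma>0}" and ?Wout = "W - {w. fst w = \<sigma>0}"
  have graph: "simple_graph Vs E"
    unfolding E using simple_graph_induced[OF simple_graph_blowup Vs] .
  have WV: "W \<subseteq> Vs - {(\<sigma>0, u0)}"
    using W simple_graph_edgeD[OF graph] unfolding nbhd_def by blast
  have finW: "finite W"
    using graph WV finite_subset unfolding simple_graph_def by blast
  have pos: "\<forall>w\<in>W. 1 \<le> f w"
    using legal WV by (force simp: delsave_fun_def)
  have "sum (q \<sigma>0) ?WH \<le> sum (\<lambda>v. f (\<sigma>0, v)) ?WH"
    by (rule sum_mono) (simp add: copy_saved_def)
  also have "\<dots> \<le> sum (\<lambda>v. f (\<sigma>0, v)) {v. (\<sigma>0, v) \<in> W}"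
  proof (rule sum_mono2)
    show "?WH \<subseteq> {v. (\<sigma>0, v) \<in> W}"
      unfolding copy_saved_def by blast
    have "{v. (\<sigma>0, v) \<in> W} = snd ` ?Win" by force
    then show "finite {v. (\<sigma>0, v) \<in> W}" using finW by simp
  qed (use pos in force)+
  also have "\<dots> = sum f ?Win"
  proof -
    have "?Win = Pair \<sigma>0 ` {v. (\<sigma>0, v) \<in> W}" by force
    then show ?thesis by (simp add: sum.reindex inj_on_def)
  qed
  finally have "sum (q \<sigma>0) ?WH \<le> sum f W - sum f ?Wout"
    using sum.Int_Diff[OF finW, of f "{w. fst w = \<sigma>0}"] by simp
  moreover have "of_bool (?Wout \<noteq> {}) \<le> sum f ?Wout"
    using finW pos by (intro of_bool_nonempty_le_sum) auto
  moreover have "f (\<sigma>0, u0) \<le> q \<sigma>0 u0 + of_bool (u0 \<in> X \<and> (\<sigma>0, u0) \<notin> C)"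
    using bound u unfolding weight_bound_def by auto
  moreover have "of_bool (u0 \<in> X \<and> (\<sigma>0, u0) \<notin> C) \<le> (of_bool (?Wout \<noteq> {}) :: int)"
    using spent by (auto simp: of_bool_def)
  ultimately show ?thesis
    using surplus by linarith
qed

lemma removable_slice_delsave:
  assumes Vs: "Vs \<subseteq> blowup_vertices H X" and E: "E = induced (blowup_edges EH X) Vs"
    and u: "(\<sigma>0, u0) \<in> Vs" and W: "W \<subseteq> nbhd E (\<sigma>0, u0)"
    and less: "sum (q \<sigma>0) WH < q \<sigma>0 u0" and WH: "WH \<subseteq> {v. (\<sigma>0, v) \<in> W}"
    and rest: "removable (slice Vs \<sigma>0 - {u0}) (induced EH (slice Vs \<sigma>0 - {u0}))
      (delsave_fun (induced EH (slice Vs \<sigma>0)) (q \<sigma>0) u0 WH)"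
  shows "removable (slice Vs \<sigma>0) (induced EH (slice Vs \<sigma>0)) (q \<sigma>0)"
proof -
  let ?S = "slice Vs \<sigma>0"
  have u0: "u0 \<in> ?S"
    using u by (simp add: slice_def)
  have "WH \<subseteq> nbhd (induced EH ?S) u0"
    using W WH nbhd_induced_blowup[OF Vs u] E by auto
  moreover have "simple_graph (?S - {u0}) (induced EH (?S - {u0}))"
    using Vs by (intro simple_graph_induced[OF simple]) (auto simp: slice_def blowup_vertices_def)
  then have "\<forall>x\<in>?S - {u0}. 1 \<le> delsave_fun (induced EH ?S) (q \<sigma>0) u0 WH x"
    using removable_weight_ge_1[OF rest] by blast
  ultimately show ?thesis
    using removable.delsave[OF u0 _ less] rest induced_remove[of EH ?S u0] by simp
qed

lemma removable_slice_step:
  assumes Vs: "Vs \<subseteq> blowup_vertices H X" and E: "E = induced (blowup_edges EH X) Vs"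
    and u: "(\<sigma>0, u0) \<in> Vs" and W: "W \<subseteq> nbhd E (\<sigma>0, u0)" and surplus: "sum f W < f (\<sigma>0, u0)"
    and legal: "\<forall>x\<in>Vs - {(\<sigma>0, u0)}. 1 \<le> delsave_fun E f (\<sigma>0, u0) W x"
    and bound: "weight_bound Vs f q C"
    and spent: "\<sigma> = \<sigma>0 \<Longrightarrow> u0 \<in> X \<Longrightarrow> (\<sigma>0, u0) \<in> spent_after E (\<sigma>0, u0) W C"
    and rest: "removable (slice (Vs - {(\<sigma>0, u0)}) \<sigma>) (induced EH (slice (Vs - {(\<sigma>0, u0)}) \<sigma>))
      ((q(\<sigma>0 := delsave_fun (induced EH (slice Vs \<sigma>0)) (q \<sigma>0) u0 (copy_saved W f q \<sigma>0))) \<sigma>)"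
  shows "removable (slice Vs \<sigma>) (induced EH (slice Vs \<sigma>)) (q \<sigma>)"
proof (cases "\<sigma> = \<sigma>0")
  case False
  then have "slice (Vs - {(\<sigma>0, u0)}) \<sigma> = slice Vs \<sigma>"
    unfolding slice_def by auto
  then show ?thesis
    using rest False by simp
next
  case True
  have "u0 \<in> X \<and> (\<sigma>0, u0) \<notin> C \<longrightarrow> (\<exists>w\<in>W. fst w \<noteq> \<sigma>0)"
    using spent[OF True] unfolding spent_after_def by (auto split: if_splits)
  from slice_delsave_surplus[OF Vs E u W surplus legal bound this]
  have less: "sum (q \<sigma>0) (copy_saved W f q \<sigma>0) < q \<sigma>0 u0" .
  have "slice (Vs - {(\<sigma>0, u0)}) \<sigma>0 = slice Vs \<sigma>0 - {u0}"
    unfolding slice_def by auto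
  then have "removable (slice Vs \<sigma>0 - {u0}) (induced EH (slice Vs \<sigma>0 - {u0}))
      (delsave_fun (induced EH (slice Vs \<sigma>0)) (q \<sigma>0) u0 (copy_saved W f q \<sigma>0))"
    using rest True by simp
  moreover have "copy_saved W f q \<sigma>0 \<subseteq> {v. (\<sigma>0, v) \<in> W}"
    unfolding copy_saved_def by blast
  ultimately show ?thesis
    using removable_slice_delsave[of Vs E \<sigma>0 u0 W q "copy_saved W f q \<sigma>0", OF Vs E u W less]
    unfolding True by blast
qed

lemma removable_blowup_slices:
  assumes "removable Vs E f" "Vs \<subseteq> blowup_vertices H X" "E = induced (blowup_edges EH X) Vs"
    "weight_bound Vs f q C" "links_covered Vs C"
  shows "\<exists>C'. C' - Vs = C - Vs \<and> links_covered {} C' \<and>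
           (\<forall>\<sigma>\<in>dlists X. Pair \<sigma> ` X \<subseteq> C' \<longrightarrow> removable (slice Vs \<sigma>) (induced EH (slice Vs \<sigma>)) (q \<sigma>))"
  using assms
proof (induction arbitrary: C q rule: removable.induct)
  case (empty Vs E f C q)
  then show ?case
    by (intro exI[of _ C]) (simp add: slice_def removable.empty)
next
  case (delsave u Vs W E f C q)
  obtain \<sigma>0 u0 where u: "u = (\<sigma>0, u0)" by (cases u)
  define C1 where "C1 = spent_after E u W C"
  define q1 where "q1 = q(\<sigma>0 := delsave_fun (induced EH (slice Vs \<sigma>0)) (q \<sigma>0) u0 (copy_saved W f q \<sigma>0))"
  have "weight_bound (Vs - {u}) (delsave_fun E f u W) q1 C1"
    unfolding C1_def q1_def u
    by (rule weight_bound_delsave[OF delsave.prems(1,2) delsave.hyps(1)[unfolded u] delsave.prems(3)])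
  moreover have "links_covered (Vs - {u}) C1"
    unfolding C1_def by (rule links_covered_delsave[OF delsave.prems(2) delsave.hyps(1) delsave.prems(4)])
  moreover have "{e \<in> E. u \<notin> e} = induced (blowup_edges EH X) (Vs - {u})"
    using delsave.prems(2) induced_remove by simp
  ultimately have "\<exists>C'. C' - (Vs - {u}) = C1 - (Vs - {u}) \<and> links_covered {} C' \<and>
      (\<forall>\<sigma>\<in>dlists X. Pair \<sigma> ` X \<subseteq> C' \<longrightarrow>
         removable (slice (Vs - {u}) \<sigma>) (induced EH (slice (Vs - {u}) \<sigma>)) (q1 \<sigma>))"
    using delsave.prems(1) by (intro delsave.IH) auto
  then obtain C' where C': "C' - (Vs - {u}) = C1 - (Vs - {u})" "links_covered {} C'"
    "\<forall>\<sigma>\<in>dlists X. Pair \<sigma> ` X \<subseteq> C' \<longrightarrow>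
       removable (slice (Vs - {u}) \<sigma>) (induced EH (slice (Vs - {u}) \<sigma>)) (q1 \<sigma>)"
    by blast
  have "nbhd E u \<subseteq> Vs"
    using delsave.prems(2) unfolding nbhd_def induced_def by blast
  then have "C1 - Vs = C - Vs"
    using delsave.hyps(1) unfolding C1_def spent_after_def by auto
  moreover have "C' - Vs = (C1 - (Vs - {u})) - {u}"
    using C'(1) delsave.hyps(1) by auto
  ultimately have "C' - Vs = C - Vs"
    using delsave.hyps(1) by auto
  moreover have "removable (slice Vs \<sigma>) (induced EH (slice Vs \<sigma>)) (q \<sigma>)"
    if \<sigma>: "\<sigma> \<in> dlists X" "Pair \<sigma> ` X \<subseteq> C'" for \<sigma>
  proof (rule removable_slice_step[of Vs E \<sigma>0 u0 W f q C \<sigma>,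
        OF delsave.prems(1,2) delsave.hyps(1,2,3,4)[unfolded u] delsave.prems(3)])
    show "(\<sigma>0, u0) \<in> spent_after E (\<sigma>0, u0) W C" if "\<sigma> = \<sigma>0" "u0 \<in> X"
      using C'(1) \<sigma>(2) that u unfolding C1_def by blast
    show "removable (slice (Vs - {(\<sigma>0, u0)}) \<sigma>) (induced EH (slice (Vs - {(\<sigma>0, u0)}) \<sigma>))
        ((q(\<sigma>0 := delsave_fun (induced EH (slice Vs \<sigma>0)) (q \<sigma>0) u0 (copy_saved W f q \<sigma>0))) \<sigma>)"
      using C'(3) \<sigma> unfolding q1_def u by blast
  qed
  ultimately show ?case
    using C'(2) by (intro exI[of _ C']) simp
qed

lemma not_removable_blowup:
  assumes "\<not> removable H EH h"
  shows "\<not> removable (blowup_vertices H X) (blowup_edges EH X) (blowup_weight h X)"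
proof
  let ?V = "blowup_vertices H X"
  assume rem: "removable ?V (blowup_edges EH X) (blowup_weight h X)"
  have edges: "blowup_edges EH X = induced (blowup_edges EH X) ?V"
    using induced_self[OF simple_graph_blowup] by simp
  have bound: "weight_bound ?V (blowup_weight h X) (\<lambda>_. h) {}"
    by (simp add: weight_bound_def blowup_weight_def)
  have covered: "links_covered ?V {}"
    using simple_graph_edge_subset[OF simple_graph_blowup]
    unfolding links_covered_def blowup_edges_def by blast
  obtain C where C: "links_covered {} C"
    "\<forall>\<sigma>\<in>dlists X. Pair \<sigma> ` X \<subseteq> C \<longrightarrow> removable (slice ?V \<sigma>) (induced EH (slice ?V \<sigma>)) h"
    using removable_blowup_slices[OF rem subset_refl edges bound covered] by blast
  have "\<forall>\<rho> x \<tau>. \<rho> @ x # \<tau> \<in> dlists X \<longrightarrow> (\<rho>, x) \<in> C \<or> (\<rho> @ x # \<tau>, x) \<in> C"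
  proof (intro allI impI)
    fix \<rho> x \<tau> assume "\<rho> @ x # \<tau> \<in> dlists X"
    then have "{(\<rho>, x), (\<rho> @ x # \<tau>, x)} \<in> link_edges (dlists X)"
      unfolding link_edges_def by blast
    from bspec[OF C(1)[unfolded links_covered_def] this]
    have "{(\<rho>, x), (\<rho> @ x # \<tau>, x)} \<inter> C \<noteq> {}"
      by simp
    then show "(\<rho>, x) \<in> C \<or> (\<rho> @ x # \<tau>, x) \<in> C"
      by blast
  qed
  moreover have "finite X"
    using simple finite_subset[OF X_subset] unfolding simple_graph_def by blast
  moreover have "[] \<in> dlists X"
    by (simp add: dlists_def)
  ultimately obtain \<sigma> where \<sigma>: "\<sigma> \<in> dlists X" "Pair \<sigma> ` X \<subseteq> C"
    using exists_dlist_covered_extension[of X C "[]"] by auto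
  have "slice ?V \<sigma> = H"
    using \<sigma>(1) unfolding slice_def blowup_vertices_def by auto
  then show False
    using C(2) \<sigma> assms induced_self[OF simple] by auto
qed

lemma degenerate_nonremovable_blowup:
  assumes "degenerate_nonremovable H EH h"
  shows "degenerate_nonremovable (blowup_vertices H X) (blowup_edges EH X) (blowup_weight h X)"
  using assms simple_graph_blowup strict_t3_degenerate_blowup not_removable_blowup
  unfolding degenerate_nonremovable_def by blast

end

section \<open>Constant weights\<close>

lemma degenerate_nonremovable_image:
  assumes "degenerate_nonremovable V E f" "inj_on \<phi> V" "\<forall>x\<in>V. g (\<phi> x) = f x"
  shows "degenerate_nonremovable (\<phi> ` V) ((`) \<phi> ` E) g"
proof -
  let ?\<psi> = "inv_into V \<phi>"
  have simple: "simple_graph V E"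
    using assms(1) unfolding degenerate_nonremovable_def by blast
  have "\<not> removable (\<phi> ` V) ((`) \<phi> ` E) g"
  proof
    assume "removable (\<phi> ` V) ((`) \<phi> ` E) g"
    then have "removable (?\<psi> ` \<phi> ` V) ((`) ?\<psi> ` (`) \<phi> ` E) f"
      using assms(2,3) by (intro removable_image[OF _ simple_graph_image[OF simple assms(2)]]
          inj_on_inv_into) auto
    moreover have "?\<psi> ` \<phi> ` V = V"
      using assms(2) by (simp add: inv_into_image_cancel)
    moreover have "(`) ?\<psi> ` (`) \<phi> ` E = E"
    proof -
      have "?\<psi> ` \<phi> ` e = e" if "e \<in> E" for e
        using inv_into_image_cancel[OF assms(2) simple_graph_edge_subset[OF simple that]] .
      then show ?thesis
        by (simp add: image_image)
    qed
    ultimately have "removable V E f"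
      by simp
    then show False
      using assms(1) unfolding degenerate_nonremovable_def by blast
  qed
  then show ?thesis
    using assms simple simple_graph_image strict_t3_degenerate_image
    unfolding degenerate_nonremovable_def by blast
qed

lemma degenerate_nonremovable_nat:
  assumes "degenerate_nonremovable V E f"
  obtains G :: "nat set" and EG g where "degenerate_nonremovable G EG g" "g ` G = f ` V"
proof -
  have "finite V"
    using assms unfolding degenerate_nonremovable_def simple_graph_def by blast
  then obtain \<phi> :: "'a \<Rightarrow> nat" where \<phi>: "inj_on \<phi> V"
    using finite_imp_inj_to_nat_seg by blast
  have "(f \<circ> inv_into V \<phi>) ` \<phi> ` V = f ` (inv_into V \<phi> ` \<phi> ` V)"
    by (simp only: image_comp comp_assoc)
  also have "\<dots> = f ` V"
    using \<phi> by (simp add: inv_into_image_cancel)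
  finally have "(f \<circ> inv_into V \<phi>) ` \<phi> ` V = f ` V" .
  then show ?thesis
    using that degenerate_nonremovable_image[OF assms \<phi>, of "f \<circ> inv_into V \<phi>"] \<phi> by simp
qed

lemma degenerate_nonremovable_constant_weight:
  fixes k :: int
  assumes "degenerate_nonremovable (H :: nat set) EH h" "h ` H \<subseteq> {k - int m..k}"
  shows "\<exists>(G :: nat set) EG. degenerate_nonremovable G EG (\<lambda>_. k)"
  using assms
proof (induction m arbitrary: H EH h)
  case 0
  then have "degenerate_nonremovable (id ` H) ((`) id ` EH) (\<lambda>_. k)"
    by (intro degenerate_nonremovable_image) (auto simp: image_subset_iff)
  then show ?case
    by auto
next
  case (Suc m)
  let ?X = "{v \<in> H. h v < k}"
  interpret graph_blowup H EH ?X
    using Suc.prems(1) by unfold_locales (auto simp: degenerate_nonremovable_def)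
  obtain G :: "nat set" and EG g where G: "degenerate_nonremovable G EG g"
    "g ` G = blowup_weight h ?X ` blowup_vertices H ?X"
    using degenerate_nonremovable_nat[OF degenerate_nonremovable_blowup[OF Suc.prems(1)]] by blast
  have "blowup_weight h ?X ` blowup_vertices H ?X \<subseteq> {k - int m..k}"
    using Suc.prems(2) by (auto simp: blowup_weight_def blowup_vertices_def image_subset_iff)
  then show ?case
    using Suc.IH[OF G(1)] G(2) by simp
qed

theorem proposition3p3:
  fixes H :: "'a set" and EH :: "'a set set" and h :: "'a \<Rightarrow> int"
  assumes "simple_graph H EH"
    and "\<forall>v\<in>H. h v \<ge> 1"
    and "strict_t3_degenerate H EH h"
    and "\<not> removable H EH h"
  shows "\<exists>(G :: nat set) (EG :: nat set set) (k :: int).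
           simple_graph G EG \<and> k \<ge> 1 \<and>
           strict_t3_degenerate G EG (\<lambda>_. k) \<and> \<not> removable G EG (\<lambda>_. k)"
proof -
  define k where "k = Max (h ` H)"
  have "finite H" "H \<noteq> {}"
    using assms(1,4) removable.empty unfolding simple_graph_def by blast+
  then have "\<forall>v\<in>H. h v \<le> k" "k \<in> h ` H"
    unfolding k_def by simp_all
  then have "1 \<le> k" and "h ` H \<subseteq> {1..k}"
    using assms(2) by auto
  moreover have "degenerate_nonremovable H EH h"
    using assms(1,3,4) unfolding degenerate_nonremovable_def by blast
  then obtain G0 :: "nat set" and EG0 g0 where "degenerate_nonremovable G0 EG0 g0" "g0 ` G0 = h ` H"
    by (rule degenerate_nonremovable_nat)
  ultimately have "\<exists>(G :: nat set) EG. degenerate_nonremovable G EG (\<lambda>_. k)"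
    using degenerate_nonremovable_constant_weight[of G0 EG0 g0 k "nat (k - 1)"] by simp
  then obtain G :: "nat set" and EG where "degenerate_nonremovable G EG (\<lambda>_. k)"
    by blast
  then show ?thesis
    using \<open>1 \<le> k\<close> unfolding degenerate_nonremovable_def by blast
qed

end
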